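(* Let $p$ be an odd prime, let $l>2$ be an integer with $l\mid p-1$, and let $\omega$ be a primitive $l$-th root of unity in $\mathbb{F}_p$. For $(r_1,r_2,r_3)\in\{(1,0,3),(0,3,1),(0,1,3)\}$ let $\mathcal{C}_{(r_1,r_2,r_3)}$ be the cyclic code over $\mathbb{F}_p$ generated by $(x-1)^{r_1}(x+1)^{r_2}(x-\omega)^{r_3}$, of length $lp$ when $r_2=0$, and of length $lp$ if $l$ is even, $2lp$ if $l$ is odd, when $r_2\neq 0$. For $(r_1,r_2,r_3)\in\{(0,3,1),(0,1,3)\}$ assume additionally that $l$ is odd or $l\equiv 0\pmod 4$. Then $\mathcal{C}_{(r_1,r_2,r_3)}$ is an MDS symbol-pair code with minimum symbol-pair distance $d_p=6$.
   Context: For $\mathbf{x}=(x_0,\dots,x_{n-1})\in\mathbb{F}_p^n$, the symbol-pair weight is $\omega_p(\mathbf{x})=|\{i:(x_i,x_{i+1})\neq(0,0)\}|$ (indices modulo $n$), and the symbol-pair distance is $D_p(\mathbf{x},\mathbf{y})=|\{i:(x_i,x_{i+1})\neq(y_i,y_{i+1})\}|$. The minimum symbol-pair distance is the minimum of $D_p$ over distinct codewords. A code of length $n$ with minimum symbol-pair distance $d_p$ is an MDS symbol-pair code if $|\mathcal{C}|=p^{n-d_p+2}$. The cyclic code generated by $g(x)\mid x^n-1$ is the ideal $\langle g(x)\rangle$ in $\mathbb{F}_p[x]/\langle x^n-1\rangle$. *)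

theory Defs
  imports "HOL-Computational_Algebra.Polynomial" "HOL-Library.Cardinality"
begin

text \<open>Vectors of length n over a field are functions nat => 'a; only indices 0..n-1 matter,
  and indices are taken modulo n.\<close>

definition sp_weight :: "nat \<Rightarrow> (nat \<Rightarrow> 'a::zero) \<Rightarrow> nat" where
  "sp_weight n x = card {i \<in> {0..<n}. (x i, x ((i + 1) mod n)) \<noteq> (0, 0)}"

definition sp_dist :: "nat \<Rightarrow> (nat \<Rightarrow> 'a) \<Rightarrow> (nat \<Rightarrow> 'a) \<Rightarrow> nat" where
  "sp_dist n x y = card {i \<in> {0..<n}. (x i, x ((i + 1) mod n)) \<noteq> (y i, y ((i + 1) mod n))}"

definition min_sp_dist :: "nat \<Rightarrow> (nat \<Rightarrow> 'a) set \<Rightarrow> nat" where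
  "min_sp_dist n C = Min {sp_dist n x y | x y. x \<in> C \<and> y \<in> C \<and> x \<noteq> y}"

text \<open>The cyclic code of length n generated by g: the ideal generated by g in
  F[x]/(x^n - 1), each residue represented by its reduced polynomial of degree < n,
  and the codeword being its coefficient vector (c_0,...,c_{n-1}).\<close>

definition cyclic_code :: "nat \<Rightarrow> 'a::field poly \<Rightarrow> (nat \<Rightarrow> 'a) set" where
  "cyclic_code n g = {(\<lambda>i. if i < n then coeff c i else 0) | c.
      \<exists>a. c = (a * g) mod (monom 1 n - 1)}"

definition MDS_symbol_pair :: "nat \<Rightarrow> nat \<Rightarrow> (nat \<Rightarrow> 'a) set \<Rightarrow> nat \<Rightarrow> bool" where
  "MDS_symbol_pair q n C d = (min_sp_dist n C = d \<and> card C = q ^ (n + 2 - d))"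

definition primitive_root_unity :: "nat \<Rightarrow> 'a::field \<Rightarrow> bool" where
  "primitive_root_unity l w = (w ^ l = 1 \<and> (\<forall>k. 0 < k \<and> k < l \<longrightarrow> w ^ k \<noteq> 1))"

end

theory Submission
  imports Defs "HOL-Library.FuncSet" "HOL-Number_Theory.Cong"
begin

text \<open>
  Let \<open>g = (x - a)^3 (x - c)\<close> over a finite field of size \<open>q\<close> and odd characteristic \<open>p\<close>, where
  \<open>a/c\<close> has order \<open>m\<close> coprime to \<open>p\<close>, so that \<open>g\<close> divides \<open>(x^m - 1)^p = x^n - 1\<close> with
  \<open>n = m p\<close>. A nonzero codeword of symbol-pair weight at most 5 can be rotated to start a run of
  nonzero entries at position 0; counting the pairs it touches shows that, up to a further
  rotation, it is a nonzero polynomial of degree at most 3 or a trinomial \<open>u + b x + w x^j\<close> with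
  \<open>u w \<noteq> 0\<close> and \<open>2 \<le> j < n\<close>. The first is excluded by \<open>deg g = 4\<close>. For the second, the triple
  root \<open>a\<close> kills the trinomial and its first two derivatives, which forces \<open>p | j\<close>, \<open>b = 0\<close> and
  \<open>u + w a^j = 0\<close>; together with \<open>u + w c^j = 0\<close> this gives \<open>(a/c)^j = 1\<close>, hence \<open>m p | j\<close>,
  contradicting \<open>j < n\<close>. The code has \<open>q^(n-4)\<close> words and \<open>g\<close> itself has pair weight 6, so it
  is MDS with \<open>d_p = 6\<close>. For the three generators of the theorem \<open>a/c\<close> is \<open>\<omega>\<close>, \<open>-\<omega>\<close> or
  \<open>-1/\<omega>\<close>; the latter two have order \<open>2l\<close> for odd \<open>l\<close> and \<open>l\<close> for \<open>4 | l\<close>.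
\<close>

section \<open>Cyclic codes as sets of coefficient vectors\<close>

definition vec_of_poly :: "nat \<Rightarrow> 'a::zero poly \<Rightarrow> nat \<Rightarrow> 'a" where
  "vec_of_poly n c = (\<lambda>i. if i < n then coeff c i else 0)"

definition poly_of_vec :: "nat \<Rightarrow> (nat \<Rightarrow> 'a::comm_monoid_add) \<Rightarrow> 'a poly" where
  "poly_of_vec n v = (\<Sum>i<n. monom (v i) i)"

lemma coeff_poly_of_vec: "coeff (poly_of_vec n v) i = (if i < n then v i else 0)"
  unfolding poly_of_vec_def by (simp add: coeff_sum coeff_monom)

lemma vec_of_poly_of_vec: "\<forall>i\<ge>n. v i = 0 \<Longrightarrow> vec_of_poly n (poly_of_vec n v) = v"
  by (auto simp: vec_of_poly_def coeff_poly_of_vec)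

lemma poly_of_vec_of_poly: "degree c < n \<Longrightarrow> poly_of_vec n (vec_of_poly n c) = c"
  by (rule poly_eqI) (auto simp: coeff_poly_of_vec vec_of_poly_def coeff_eq_0)

lemma degree_poly_of_vec_less: "0 < n \<Longrightarrow> degree (poly_of_vec n v) < n"
  using degree_le[of "n - 1" "poly_of_vec n v"] by (fastforce simp: coeff_poly_of_vec)

lemma poly_of_vec_diff:
  "poly_of_vec n (v - w) = poly_of_vec n v - poly_of_vec n (w :: nat \<Rightarrow> 'a::ab_group_add)"
  by (rule poly_eqI) (simp add: coeff_poly_of_vec)

lemma poly_of_vec_eq_sum:
  assumes "{i. v i \<noteq> 0} \<subseteq> A" "A \<subseteq> {..<n}"
  shows "poly_of_vec n v = (\<Sum>i\<in>A. monom (v i) i)"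
  unfolding poly_of_vec_def using assms by (intro sum.mono_neutral_right) auto

lemma card_degree_less:
  assumes "0 < k"
  shows "card {q :: 'a::{comm_monoid_add,finite} poly. degree q < k} = CARD('a) ^ k"
proof -
  have "bij_betw (\<lambda>q. restrict (coeff q) {..<k}) {q :: 'a poly. degree q < k} ({..<k} \<rightarrow>\<^sub>E UNIV)"
  proof (rule bij_betw_byWitness[where f' = "poly_of_vec k"])
    show "\<forall>q\<in>{q. degree q < k}. poly_of_vec k (restrict (coeff q) {..<k}) = q"
      by (auto intro!: poly_eqI simp: coeff_poly_of_vec coeff_eq_0)
    show "\<forall>h\<in>{..<k} \<rightarrow>\<^sub>E UNIV. restrict (coeff (poly_of_vec k h)) {..<k} = h"
      by (auto simp: coeff_poly_of_vec PiE_def extensional_def)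
    show "poly_of_vec k ` ({..<k} \<rightarrow>\<^sub>E UNIV) \<subseteq> {q. degree q < k}"
      using degree_poly_of_vec_less[OF assms] by auto
  qed (simp add: image_subset_iff)
  then show ?thesis
    by (simp add: bij_betw_same_card card_PiE)
qed

lemma degree_monom_minus_1: "0 < n \<Longrightarrow> degree (monom 1 n - 1 :: 'a::field poly) = n"
  using degree_add_eq_left[of "-1" "monom (1::'a) n"] by (simp add: degree_monom_eq)

lemma cyclic_code_eq_image:
  fixes g :: "'a::field poly"
  assumes g: "g dvd monom 1 n - 1" and n: "0 < n"
  shows "cyclic_code n g = vec_of_poly n ` {c. g dvd c \<and> degree c < n}"
proof -
  have xn: "monom 1 n - 1 \<noteq> (0 :: 'a poly)" "degree (monom 1 n - 1 :: 'a poly) = n"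
    using degree_monom_minus_1[OF n, where 'a='a] n by auto
  have "{(a * g) mod (monom 1 n - 1) | a. True} = {c. g dvd c \<and> degree c < n}"
  proof (intro set_eqI iffI)
    fix c assume "c \<in> {(a * g) mod (monom 1 n - 1) | a. True}"
    then obtain a where "c = (a * g) mod (monom 1 n - 1)" by blast
    then show "c \<in> {c. g dvd c \<and> degree c < n}"
      using g degree_mod_less[OF xn(1), of "a * g"] xn(2) n by (auto simp: dvd_mod)
  next
    fix c assume c: "c \<in> {c. g dvd c \<and> degree c < n}"
    then obtain a where "c = a * g" by (metis dvdE mult.commute mem_Collect_eq)
    moreover have "c mod (monom 1 n - 1) = c"
      using c xn(2) by (intro mod_poly_less) auto
    ultimately show "c \<in> {(a * g) mod (monom 1 n - 1) | a. True}" by (auto intro!: exI[of _ a])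
  qed
  then show ?thesis
    unfolding cyclic_code_def vec_of_poly_def[symmetric] by blast
qed

lemma mem_cyclic_code_iff:
  fixes g :: "'a::field poly"
  assumes "g dvd monom 1 n - 1" "0 < n"
  shows "v \<in> cyclic_code n g \<longleftrightarrow> (\<forall>i\<ge>n. v i = 0) \<and> g dvd poly_of_vec n v"
proof
  assume "v \<in> cyclic_code n g"
  then obtain c where c: "v = vec_of_poly n c" "g dvd c" "degree c < n"
    using cyclic_code_eq_image[OF assms] by blast
  then have "poly_of_vec n v = c"
    by (simp add: poly_of_vec_of_poly)
  with c show "(\<forall>i\<ge>n. v i = 0) \<and> g dvd poly_of_vec n v"
    by (simp add: vec_of_poly_def)
next
  assume "(\<forall>i\<ge>n. v i = 0) \<and> g dvd poly_of_vec n v"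
  then show "v \<in> cyclic_code n g"
    unfolding cyclic_code_eq_image[OF assms]
    using degree_poly_of_vec_less[OF assms(2)] vec_of_poly_of_vec[of n v]
    by (intro image_eqI[of _ _ "poly_of_vec n v"]) auto
qed

lemma diff_mem_cyclic_code:
  fixes g :: "'a::field poly"
  assumes "g dvd monom 1 n - 1" "0 < n" "v \<in> cyclic_code n g" "w \<in> cyclic_code n g"
  shows "v - w \<in> cyclic_code n g"
  using assms by (simp add: mem_cyclic_code_iff poly_of_vec_diff dvd_diff)

lemma card_cyclic_code:
  fixes g :: "'a::{field,finite} poly"
  assumes g: "g dvd monom 1 n - 1" "g \<noteq> 0" and deg: "degree g < n"
  shows "card (cyclic_code n g) = CARD('a) ^ (n - degree g)"
proof -
  have n: "0 < n" using deg by simp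
  have multiples: "{c. g dvd c \<and> degree c < n} = (\<lambda>q. q * g) ` {q. degree q < n - degree g}"
  proof (intro set_eqI iffI)
    fix c assume c: "c \<in> {c. g dvd c \<and> degree c < n}"
    then obtain q where q: "c = q * g" by (metis dvdE mult.commute mem_Collect_eq)
    have "degree q < n - degree g"
      using c q g(2) deg by (cases "q = 0") (auto simp: degree_mult_eq)
    then show "c \<in> (\<lambda>q. q * g) ` {q. degree q < n - degree g}" using q by blast
  next
    fix c assume "c \<in> (\<lambda>q. q * g) ` {q. degree q < n - degree g}"
    then obtain q where "c = q * g" "degree q < n - degree g" by blast
    then show "c \<in> {c. g dvd c \<and> degree c < n}"
      using degree_mult_le[of q g] by auto
  qed
  have "inj_on (vec_of_poly n) {c. g dvd c \<and> degree c < n}"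
    by (rule inj_on_inverseI[where g = "poly_of_vec n"]) (simp add: poly_of_vec_of_poly)
  moreover have "inj_on (\<lambda>q. q * g) {q. degree q < n - degree g}"
    using g(2) by (auto intro: inj_onI)
  ultimately show ?thesis
    using card_degree_less[of "n - degree g", where 'a='a] deg
    by (simp add: cyclic_code_eq_image[OF g(1) n] card_image multiples)
qed

section \<open>Symbol-pair weight and cyclic shifts\<close>

lemma sp_dist_eq_sp_weight_diff:
  "sp_dist n x y = sp_weight n (x - (y :: nat \<Rightarrow> 'a::ab_group_add))"
  unfolding sp_dist_def sp_weight_def by (simp add: fun_diff_def)

lemma sp_dist_le: "sp_dist n x y \<le> n"
  unfolding sp_dist_def by (rule order_trans[OF card_mono[of "{0..<n}"]]) auto

lemma min_sp_dist_eqI: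
  assumes "\<And>x y. x \<in> C \<Longrightarrow> y \<in> C \<Longrightarrow> x \<noteq> y \<Longrightarrow> d \<le> sp_dist n x y"
    and "x \<in> C" "y \<in> C" "x \<noteq> y" "sp_dist n x y \<le> d"
  shows "min_sp_dist n C = d"
  unfolding min_sp_dist_def
proof (rule Min_eqI)
  show "finite {sp_dist n x y | x y. x \<in> C \<and> y \<in> C \<and> x \<noteq> y}"
    by (rule finite_subset[of _ "{..n}"]) (auto simp: sp_dist_le)
qed (use assms in \<open>force+\<close>)

lemma sp_weight_vec_of_poly_le:
  assumes "degree c < n"
  shows "sp_weight n (vec_of_poly n c) \<le> degree c + 2"
proof -
  have "{i \<in> {0..<n}. (vec_of_poly n c i, vec_of_poly n c ((i + 1) mod n)) \<noteq> (0, 0)}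
      \<subseteq> insert (n - 1) {..degree c}"
    by (auto simp: vec_of_poly_def dest: le_degree)
  then have "sp_weight n (vec_of_poly n c) \<le> card (insert (n - 1) {..degree c})"
    unfolding sp_weight_def by (intro card_mono) auto
  also have "\<dots> \<le> degree c + 2"
    using card_insert_le_m1[of "degree c + 2" "{..degree c}"] by simp
  finally show ?thesis .
qed

definition rotate_vec :: "nat \<Rightarrow> nat \<Rightarrow> (nat \<Rightarrow> 'a::zero) \<Rightarrow> nat \<Rightarrow> 'a" where
  "rotate_vec n s v = (\<lambda>i. if i < n then v ((i + s) mod n) else 0)"

lemma rotate_vec_mod: "rotate_vec n (s mod n) v = rotate_vec n s v"
  unfolding rotate_vec_def by (simp only: mod_add_right_eq)

lemma rotate_vec_rotate_vec: "rotate_vec n s (rotate_vec n t v) = rotate_vec n (s + t) v"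
  by (auto simp: rotate_vec_def mod_add_left_eq add.assoc)

lemma rotate_vec_0: "\<forall>i\<ge>n. v i = 0 \<Longrightarrow> rotate_vec n 0 v = v"
  by (auto simp: rotate_vec_def)

lemma poly_of_vec_rotate_vec_right:
  fixes v :: "nat \<Rightarrow> 'a::comm_ring_1"
  assumes n: "0 < n" and v: "\<forall>i\<ge>n. v i = 0"
  shows "poly_of_vec n (rotate_vec n (n - 1) v)
           = pCons 0 (poly_of_vec n v) - smult (v (n - 1)) (monom 1 n - 1)"
proof (rule poly_eqI)
  fix j
  have "(j + (n - 1)) mod n = j - 1" if "0 < j" "j < n"
    using that by (simp add: mod_if)
  with n v show "coeff (poly_of_vec n (rotate_vec n (n - 1) v)) j
      = coeff (pCons 0 (poly_of_vec n v) - smult (v (n - 1)) (monom 1 n - 1)) j"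
    by (cases j) (auto simp: coeff_poly_of_vec rotate_vec_def coeff_monom coeff_pCons
        intro!: arg_cong[where f = v])
qed

lemma rotate_vec_mem_cyclic_code:
  fixes g :: "'a::field poly"
  assumes g: "g dvd monom 1 n - 1" and n: "0 < n" and v: "v \<in> cyclic_code n g"
  shows "rotate_vec n s v \<in> cyclic_code n g"
proof -
  have right: "rotate_vec n (n - 1) w \<in> cyclic_code n g" if "w \<in> cyclic_code n g" for w
  proof -
    have w: "\<forall>i\<ge>n. w i = 0" "g dvd poly_of_vec n w"
      using that mem_cyclic_code_iff[OF g n] by auto
    have "g dvd pCons 0 (poly_of_vec n w)"
      using dvd_mult[OF w(2), of "[:0, 1:]"] by simp
    then have "g dvd pCons 0 (poly_of_vec n w) - smult (w (n - 1)) (monom 1 n - 1)"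
      using g by (intro dvd_diff) (auto simp: dvd_smult)
    then show ?thesis
      unfolding mem_cyclic_code_iff[OF g n] poly_of_vec_rotate_vec_right[OF n w(1)]
      by (simp add: rotate_vec_def)
  qed
  have "rotate_vec n t v \<in> cyclic_code n g" if "t \<le> n" for t
    using that
  proof (induction t rule: inc_induct)
    case base
    then show ?case
      using v rotate_vec_mod[of n n v] rotate_vec_0[of n v] mem_cyclic_code_iff[OF g n] by simp
  next
    case (step t)
    have "rotate_vec n (n - 1) (rotate_vec n (Suc t) v) = rotate_vec n (n + t) v"
      using n by (simp add: rotate_vec_rotate_vec)
    also have "\<dots> = rotate_vec n t v"
      by (metis rotate_vec_mod mod_add_self1)
    finally show ?case
      using right[OF step.IH] by simp
  qed
  then show ?thesis
    using rotate_vec_mod[of n s v] n by (metis mod_less_divisor less_imp_le)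
qed

lemma sp_weight_rotate_vec_le:
  assumes n: "0 < n"
  shows "sp_weight n (rotate_vec n s v) \<le> sp_weight n v"
  unfolding sp_weight_def
proof (rule card_inj_on_le[where f = "\<lambda>i. (i + s) mod n"])
  show "inj_on (\<lambda>i. (i + s) mod n)
      {i \<in> {0..<n}. (rotate_vec n s v i, rotate_vec n s v ((i + 1) mod n)) \<noteq> (0, 0)}"
    by (rule inj_onI) (metis (no_types, lifting) atLeastLessThan_iff cong_def mem_Collect_eq
        mod_less cong_add_rcancel_nat)
  have "(Suc i mod n + s) mod n = Suc ((i + s) mod n) mod n" for i
    by presburger
  then show "(\<lambda>i. (i + s) mod n) `
      {i \<in> {0..<n}. (rotate_vec n s v i, rotate_vec n s v ((i + 1) mod n)) \<noteq> (0, 0)}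
    \<subseteq> {i \<in> {0..<n}. (v i, v ((i + 1) mod n)) \<noteq> (0, 0)}"
    using n by (auto simp: rotate_vec_def)
qed auto

section \<open>Codewords of small symbol-pair weight\<close>

lemma obtain_rotate_vec_run_start:
  fixes v :: "nat \<Rightarrow> 'a::zero"
  assumes z: "z < n" "v z = 0" and a: "a < n" "v a \<noteq> 0"
  obtains s where "rotate_vec n s v 0 \<noteq> 0" "rotate_vec n s v (n - 1) = 0"
proof -
  have "\<exists>i<n. v i = 0 \<and> v (Suc i mod n) \<noteq> 0"
  proof (rule ccontr)
    assume "\<not> ?thesis"
    then have step: "v (Suc i mod n) = 0" if "i < n" "v i = 0" for i
      using that by blast
    have "v ((z + t) mod n) = 0" for t
    proof (induction t)
      case 0
      then show ?case using z by simp
    next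
      case (Suc t)
      have "v (Suc ((z + t) mod n) mod n) = 0"
        using step[OF _ Suc.IH] z(1) by simp
      then show ?case by (simp add: mod_Suc_eq)
    qed
    from this[of "a + n - z"] show False
      using z(1) a by simp
  qed
  then obtain i where i: "i < n" "v i = 0" "v (Suc i mod n) \<noteq> 0"
    by blast
  have "(n - 1 + Suc i) mod n = i"
    using i(1) by (simp add: add.commute)
  then show ?thesis
    using that[of "Suc i"] i by (simp add: rotate_vec_def)
qed

lemma small_sp_weight_cases:
  fixes v :: "nat \<Rightarrow> 'a::zero"
  assumes n: "6 \<le> n" and v: "\<forall>i\<ge>n. v i = 0" "v 0 \<noteq> 0" "v (n - 1) = 0"
    and small: "sp_weight n v \<le> 5"
  obtains "{i. v i \<noteq> 0} \<subseteq> {0..3}"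
  | k where "4 \<le> k" "k \<le> n - 2" "v k \<noteq> 0" "{i. v i \<noteq> 0} \<subseteq> {0, 1, k}"
  | k where "4 \<le> k" "k \<le> n - 2" "v k \<noteq> 0" "v (k - 1) \<noteq> 0"
      "{i. v i \<noteq> 0} \<subseteq> {0, k - 1, k}"
proof (cases "{i. v i \<noteq> 0} \<subseteq> {0..3}")
  case True
  with that(1) show ?thesis .
next
  case False
  define T where "T = {i \<in> {0..<n}. (v i, v ((i + 1) mod n)) \<noteq> (0, 0)}"
  have not_six: False if "{a, b, c, d, e, f} \<subseteq> T" "distinct [a, b, c, d, e, f]" for a b c d e f
  proof -
    have "card {a, b, c, d, e, f} \<le> card T"
      using that(1) by (intro card_mono) (auto simp: T_def)
    with that(2) small show False
      by (simp add: sp_weight_def T_def)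
  qed
  have mem: "i \<in> T" if "i < n" "v i \<noteq> 0" for i
    using that by (simp add: T_def)
  have mem_pred: "i - 1 \<in> T" if "0 < i" "i < n" "v i \<noteq> 0" for i
    using that by (simp add: T_def)
  have last: "n - 1 \<in> T"
    using n v(2) by (simp add: T_def)
  have support: "{i. v i \<noteq> 0} \<subseteq> {..<n}"
    using v(1) not_le by blast
  define k where "k = Max {i. v i \<noteq> 0}"
  have fin: "finite {i. v i \<noteq> 0}"
    using support finite_nat_iff_bounded by blast
  have k: "v k \<noteq> 0" "\<And>i. v i \<noteq> 0 \<Longrightarrow> i \<le> k"
    using Max_in[OF fin] v(2) fin by (auto simp: k_def)
  obtain i where "v i \<noteq> 0" "3 < i"
    using False by (auto simp: subset_iff not_le)
  then have k4: "4 \<le> k"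
    using k(2) by fastforce
  have "k < n" "k \<noteq> n - 1"
    using k(1) v(1,3) not_le by auto
  then have kn: "k \<le> n - 2"
    by linarith
  have middle: "v i = 0" if "2 \<le> i" "i \<le> k - 2" for i
  proof (rule ccontr)
    assume "v i \<noteq> 0"
    then have "{n - 1, 0, i - 1, i, k - 1, k} \<subseteq> T"
      using that last mem mem_pred k(1) v(2) k4 kn by simp
    moreover have "distinct [n - 1, 0, i - 1, i, k - 1, k]"
      using that k4 kn by auto
    ultimately show False by (rule not_six)
  qed
  have not_both: "v 1 = 0 \<or> v (k - 1) = 0"
  proof (rule ccontr)
    assume "\<not> ?thesis"
    then have "{n - 1, 0, 1, k - 2, k - 1, k} \<subseteq> T"
      using last mem mem_pred[of "k - 1"] k(1) v(2) k4 kn by (simp add: numeral_2_eq_2)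
    moreover have "distinct [n - 1, 0, 1, k - 2, k - 1, k]"
      using k4 kn by auto
    ultimately show False by (rule not_six)
  qed
  have "i \<in> {0, 1, k - 1, k}" if "v i \<noteq> 0" for i
    using middle[of i] k(2)[OF that] that by (cases "2 \<le> i \<and> i \<le> k - 2") auto
  then have four: "{i. v i \<noteq> 0} \<subseteq> {0, 1, k - 1, k}"
    by blast
  show ?thesis
  proof (cases "v (k - 1) = 0")
    case True
    with four have "{i. v i \<noteq> 0} \<subseteq> {0, 1, k}"
      by auto
    with that(2) k4 kn k(1) show ?thesis .
  next
    case False
    with four not_both have "{i. v i \<noteq> 0} \<subseteq> {0, k - 1, k}"
      by auto
    with that(3) k4 kn k(1) False show ?thesis .
  qed
qed

lemma dvd_rotate_mod_monom_minus_1: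
  fixes g :: "'a::comm_ring_1 poly"
  assumes "g dvd monom 1 n - 1" "g dvd f + monom 1 i * h" "i \<le> n"
  shows "g dvd monom 1 (n - i) * f + h"
proof -
  have "monom 1 (n - i) * f + h = monom 1 (n - i) * (f + monom 1 i * h) - (monom 1 n - 1) * h"
    using assms(3) by (simp add: algebra_simps mult_monom)
  then show ?thesis
    using assms(1,2) by (simp add: dvd_diff)
qed

lemma obtain_codeword_run_start:
  fixes g :: "'a::field poly"
  assumes g: "g dvd monom 1 n - 1" and n: "0 < n"
    and v: "v \<in> cyclic_code n g" "v \<noteq> (\<lambda>_. 0)" and small: "sp_weight n v < n"
  obtains w where "w \<in> cyclic_code n g" "w 0 \<noteq> 0" "w (n - 1) = 0"
    "sp_weight n w \<le> sp_weight n v"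
proof -
  have "\<forall>i\<ge>n. v i = 0"
    using v(1) mem_cyclic_code_iff[OF g n] by blast
  then obtain a where a: "a < n" "v a \<noteq> 0"
    using v(2) not_le by blast
  obtain z where z: "z < n" "v z = 0"
  proof (rule ccontr)
    assume "\<not> thesis"
    then have "{i \<in> {0..<n}. (v i, v ((i + 1) mod n)) \<noteq> (0, 0)} = {0..<n}"
      using that by auto
    with small show False
      by (simp add: sp_weight_def)
  qed
  obtain s where "rotate_vec n s v 0 \<noteq> 0" "rotate_vec n s v (n - 1) = 0"
    using obtain_rotate_vec_run_start[OF z a] .
  then show ?thesis
    using that rotate_vec_mem_cyclic_code[OF g n v(1)] sp_weight_rotate_vec_le[OF n] by blast
qed

lemma six_le_sp_weight:
  fixes g :: "'a::field poly"
  assumes n: "6 \<le> n" and g: "g dvd monom 1 n - 1" "degree g = 4"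
    and no_trinomial: "\<And>u b w j. u \<noteq> 0 \<Longrightarrow> w \<noteq> 0 \<Longrightarrow> 2 \<le> j \<Longrightarrow> j < n \<Longrightarrow>
        \<not> g dvd [:u, b:] + monom w j"
    and v: "v \<in> cyclic_code n g" "v \<noteq> (\<lambda>_. 0)"
  shows "6 \<le> sp_weight n v"
proof (rule ccontr)
  assume "\<not> 6 \<le> sp_weight n v"
  then have small_v: "sp_weight n v \<le> 5" "sp_weight n v < n"
    using n by simp_all
  have n0: "0 < n"
    using n by simp
  obtain w where "w \<in> cyclic_code n g" and w0: "w 0 \<noteq> 0" and wl: "w (n - 1) = 0"
    and "sp_weight n w \<le> sp_weight n v"
    using obtain_codeword_run_start[OF g(1) n0 v small_v(2)] by blast
  then have wsupp: "\<forall>i\<ge>n. w i = 0" and gw: "g dvd poly_of_vec n w"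
    and small: "sp_weight n w \<le> 5"
    using mem_cyclic_code_iff[OF g(1) n0] small_v(1) by auto
  from small show False
  proof (rule small_sp_weight_cases[OF n wsupp w0 wl])
    assume "{i. w i \<noteq> 0} \<subseteq> {0..3}"
    then have "degree (poly_of_vec n w) \<le> 3"
      by (intro degree_le) (auto simp: coeff_poly_of_vec subset_iff)
    moreover have "poly_of_vec n w \<noteq> 0"
      using w0 n0 coeff_poly_of_vec[of n w 0] by auto
    ultimately show False
      using dvd_imp_degree_le[OF gw] g(2) by simp
  next
    fix k assume k: "4 \<le> k" "k \<le> n - 2" "w k \<noteq> 0" "{i. w i \<noteq> 0} \<subseteq> {0, 1, k}"
    have "poly_of_vec n w = monom (w 0) 0 + monom (w 1) 1 + monom (w k) k"
      using k by (subst poly_of_vec_eq_sum[of w "{0, 1, k}"]) auto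
    then have "poly_of_vec n w = [:w 0, w 1:] + monom (w k) k"
      by (simp add: monom_0 monom_Suc)
    then show False
      using no_trinomial[of "w 0" "w k" k "w 1"] w0 gw k n by simp
  next
    fix k assume k: "4 \<le> k" "k \<le> n - 2" "w k \<noteq> 0" "w (k - 1) \<noteq> 0"
      "{i. w i \<noteq> 0} \<subseteq> {0, k - 1, k}"
    have "poly_of_vec n w = monom (w 0) 0 + monom (w (k - 1)) (k - 1) + monom (w k) k"
      using k by (subst poly_of_vec_eq_sum[of w "{0, k - 1, k}"]) auto
    also have "\<dots> = [:w 0:] + monom 1 (k - 1) * [:w (k - 1), w k:]"
    proof -
      have "monom 1 (k - 1) * [:w (k - 1), w k:]
          = monom (w (k - 1)) (k - 1) + monom (w k) (Suc (k - 1))"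
        by (simp add: monom_altdef algebra_simps)
      with k(1) show ?thesis
        by (simp add: monom_0)
    qed
    \<comment> \<open>multiplying by \<open>x^(n-k+1)\<close> modulo \<open>x^n - 1\<close> moves the run \<open>w (k-1), w k\<close> to the front\<close>
    finally have "g dvd monom 1 (n - (k - 1)) * [:w 0:] + [:w (k - 1), w k:]"
      using gw k(2) by (intro dvd_rotate_mod_monom_minus_1[OF g(1)]) auto
    then have "g dvd [:w (k - 1), w k:] + monom (w 0) (n - (k - 1))"
      by (simp add: monom_altdef add.commute)
    moreover have "2 \<le> n - (k - 1)" "n - (k - 1) < n"
      using k(1,2) by linarith+
    ultimately show False
      using no_trinomial[of "w (k - 1)" "w 0" "n - (k - 1)" "w k"] w0 k(4) by blast
  qed
qed

lemma MDS_symbol_pair_cyclic_code_degree_4: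
  fixes g :: "'a::{field,finite} poly"
  assumes n: "6 \<le> n" and g: "g dvd monom 1 n - 1" "degree g = 4"
    and no_trinomial: "\<And>u b w j. u \<noteq> 0 \<Longrightarrow> w \<noteq> 0 \<Longrightarrow> 2 \<le> j \<Longrightarrow> j < n \<Longrightarrow>
        \<not> g dvd [:u, b:] + monom w j"
  shows "MDS_symbol_pair CARD('a) n (cyclic_code n g) 6"
proof -
  have n0: "0 < n" using n by simp
  have g0: "g \<noteq> 0" using g(2) by auto
  have zero: "(\<lambda>_. 0) \<in> cyclic_code n g"
    by (simp add: mem_cyclic_code_iff[OF g(1) n0] poly_of_vec_def)
  have deg: "degree g < n"
    using n g(2) by simp
  have gen: "vec_of_poly n g \<in> cyclic_code n g"
    unfolding mem_cyclic_code_iff[OF g(1) n0] poly_of_vec_of_poly[OF deg]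
    by (simp add: vec_of_poly_def)
  have "vec_of_poly n g 4 \<noteq> 0"
    using leading_coeff_neq_0[OF g0] n g(2) by (simp add: vec_of_poly_def)
  then have gen_nonzero: "vec_of_poly n g \<noteq> (\<lambda>_. 0)"
    by auto
  have "min_sp_dist n (cyclic_code n g) = 6"
  proof (rule min_sp_dist_eqI[OF _ gen zero gen_nonzero])
    fix x y assume "x \<in> cyclic_code n g" "y \<in> cyclic_code n g" "x \<noteq> y"
    then show "6 \<le> sp_dist n x y"
      unfolding sp_dist_eq_sp_weight_diff
      by (intro six_le_sp_weight[OF n g no_trinomial] diff_mem_cyclic_code[OF g(1) n0])
        (auto simp: fun_diff_def fun_eq_iff)
  next
    show "sp_dist n (vec_of_poly n g) (\<lambda>_. 0) \<le> 6"
      using sp_weight_vec_of_poly_le[of g n] n g(2)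
      by (simp add: sp_dist_eq_sp_weight_diff fun_diff_def)
  qed
  moreover have "card (cyclic_code n g) = CARD('a) ^ (n + 2 - 6)"
    using card_cyclic_code[OF g(1) g0] n g(2) by simp
  ultimately show ?thesis
    by (simp add: MDS_symbol_pair_def)
qed

section \<open>Trinomial multiples of a polynomial with a triple root\<close>

lemma linear_power_Suc_dvd_pderiv:
  fixes f :: "'a::idom poly"
  assumes "[:-a, 1:] ^ Suc m dvd f"
  shows "[:-a, 1:] ^ m dvd pderiv f"
proof -
  from assms obtain q where f: "f = [:-a, 1:] ^ Suc m * q"
    by (elim dvdE)
  have "pderiv f = [:-a, 1:] ^ Suc m * pderiv q
      + q * (smult (of_nat (Suc m)) ([:-a, 1:] ^ m) * pderiv [:-a, 1:])"
    by (simp add: f pderiv_mult pderiv_power_Suc del: power_Suc)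
  also have "\<dots> = [:-a, 1:] ^ m
      * ([:-a, 1:] * pderiv q + q * smult (of_nat (Suc m)) (pderiv [:-a, 1:]))"
    by (simp add: algebra_simps)
  finally show ?thesis by simp
qed

lemma triple_root_trinomial:
  fixes u b w a :: "'a::field"
  assumes u: "u \<noteq> 0" and w: "w \<noteq> 0" and j: "2 \<le> j" and a: "a \<noteq> 0"
    and triple: "[:-a, 1:] ^ 3 dvd [:u, b:] + monom w j"
  shows "CHAR('a) dvd j \<and> b = 0 \<and> u + w * a ^ j = 0"
proof -
  let ?f = "[:u, b:] + monom w j"
  have "[:-a, 1:] ^ 2 dvd pderiv ?f"
    using linear_power_Suc_dvd_pderiv[of a 2] triple by (simp add: numeral_3_eq_3)
  then have "[:-a, 1:] dvd pderiv (pderiv ?f)"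
    using linear_power_Suc_dvd_pderiv[of a 1] by (simp add: numeral_2_eq_2)
  moreover have "[:-a, 1:] dvd pderiv ?f" "[:-a, 1:] dvd ?f"
    using \<open>[:-a, 1:] ^ 2 dvd pderiv ?f\<close> triple dvd_power[of _ "[:-a, 1:]"]
    by (meson dvd_trans zero_less_numeral)+
  ultimately have f: "u + b * a + w * a ^ j = 0"
    and f': "b + of_nat j * w * a ^ (j - 1) = 0"
    and f'': "of_nat (j - 1) * (of_nat j * w) * a ^ (j - 2) = 0"
    using j by (auto simp: poly_eq_0_iff_dvd[symmetric] poly_monom pderiv_add pderiv_pCons
        pderiv_monom algebra_simps numeral_2_eq_2)
  have "of_nat (j - 1) = (0 :: 'a) \<or> of_nat j = (0 :: 'a)"
    using f'' w a by auto
  moreover have "of_nat (j - 1) \<noteq> (0 :: 'a)"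
  proof
    assume "of_nat (j - 1) = (0 :: 'a)"
    then have "of_nat j = (1 :: 'a)"
      using j of_nat_Suc[of "j - 1", where 'a='a] by simp
    then have "u = - a * (b + w * a ^ (j - 1))"
      using f j by (simp add: algebra_simps power_eq_if[of a j] eq_neg_iff_add_eq_0)
    with f' \<open>of_nat j = 1\<close> u show False by simp
  qed
  ultimately have "of_nat j = (0 :: 'a)" by blast
  with f f' show ?thesis
    by (simp add: of_nat_eq_0_iff_char_dvd)
qed

lemma not_dvd_trinomial:
  fixes a c :: "'a::field"
  assumes a: "a \<noteq> 0" and order: "\<And>j. a ^ j = c ^ j \<Longrightarrow> m dvd j"
    and coprime: "coprime m CHAR('a)"
    and u: "u \<noteq> 0" and w: "w \<noteq> 0" and j: "2 \<le> j" "j < m * CHAR('a)"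
  shows "\<not> [:-a, 1:] ^ 3 * [:-c, 1:] dvd [:u, b:] + monom w j"
proof
  assume dvd: "[:-a, 1:] ^ 3 * [:-c, 1:] dvd [:u, b:] + monom w j"
  then have "CHAR('a) dvd j" "b = 0" "u + w * a ^ j = 0"
    using triple_root_trinomial[OF u w j(1) a] dvd_mult_left by blast+
  moreover have "poly ([:u, b:] + monom w j) c = 0"
    using dvd dvd_mult_right poly_eq_0_iff_dvd by blast
  ultimately have "w * a ^ j = w * c ^ j"
    by (simp add: poly_monom add_eq_0_iff)
  then have "m dvd j"
    using order w by simp
  then have "m * CHAR('a) dvd j"
    using \<open>CHAR('a) dvd j\<close> coprime by (rule divides_mult)
  then show False
    using j by (auto dest: dvd_imp_le)
qed

lemma monom_minus_1_power_CHAR: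
  assumes "prime CHAR('a::comm_ring_1)"
  shows "(monom 1 m - 1 :: 'a poly) ^ CHAR('a) = monom 1 (m * CHAR('a)) - 1"
proof -
  have "(monom 1 m + (-1) :: 'a poly) ^ CHAR('a) = monom 1 m ^ CHAR('a) + (-1) ^ CHAR('a)"
    by (rule freshmans_dream) (use assms in simp_all)
  also have "(-1 :: 'a poly) ^ CHAR('a) = -1"
    using minus_power_prime_CHAR[where 'a = "'a poly", of "CHAR('a)" 1] assms by simp
  finally show ?thesis
    by (simp add: monom_power)
qed

lemma mult_linear_dvd_of_roots:
  fixes q :: "'a::idom poly"
  assumes "poly q a = 0" "poly q c = 0" "a \<noteq> c"
  shows "[:-a, 1:] * [:-c, 1:] dvd q"
proof -
  obtain r where q: "q = [:-a, 1:] * r"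
    using assms(1) by (auto simp: poly_eq_0_iff_dvd elim: dvdE)
  have "poly r c = 0"
    using assms(2,3) by (auto simp: q)
  then show ?thesis
    unfolding q poly_eq_0_iff_dvd by (rule mult_dvd_mono[OF dvd_refl])
qed

lemma triple_root_generator_dvd_monom_minus_1:
  fixes a c :: "'a::field"
  assumes "a ^ m = 1" "c ^ m = 1" "a \<noteq> c" and p: "prime CHAR('a)" "3 \<le> CHAR('a)"
  shows "[:-a, 1:] ^ 3 * [:-c, 1:] dvd monom 1 (m * CHAR('a)) - 1"
proof -
  let ?h = "[:-a, 1:] * [:-c, 1:]"
  have "?h dvd monom 1 m - 1"
    using assms(1-3) by (intro mult_linear_dvd_of_roots) (simp_all add: poly_monom)
  then have "?h ^ CHAR('a) dvd monom 1 (m * CHAR('a)) - 1"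
    by (metis dvd_power_same monom_minus_1_power_CHAR[OF p(1)])
  moreover have "?h ^ 3 dvd ?h ^ CHAR('a)"
    using p(2) by (rule le_imp_power_dvd)
  moreover have "[:-a, 1:] ^ 3 * [:-c, 1:] dvd [:-a, 1:] ^ 3 * [:-c, 1:] ^ 3"
    by (rule mult_dvd_mono[OF dvd_refl dvd_power]) simp
  then have "[:-a, 1:] ^ 3 * [:-c, 1:] dvd ?h ^ 3"
    by (simp only: power_mult_distrib)
  ultimately show ?thesis
    using dvd_trans by blast
qed

lemma MDS_symbol_pair_cyclic_code_triple_root:
  fixes a c :: "'a::{field,finite}"
  assumes char: "odd CHAR('a)" and m: "1 < m" "coprime m CHAR('a)"
    and roots: "a ^ m = 1" "c ^ m = 1" and order: "\<And>j. a ^ j = c ^ j \<Longrightarrow> m dvd j"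
  shows "MDS_symbol_pair CARD('a) (m * CHAR('a))
           (cyclic_code (m * CHAR('a)) ([:-a, 1:] ^ 3 * [:-c, 1:])) 6"
proof (rule MDS_symbol_pair_cyclic_code_degree_4)
  have p: "prime CHAR('a)"
    by (intro prime_CHAR_semidom finite_imp_CHAR_pos) simp
  then have p3: "3 \<le> CHAR('a)"
    using char prime_ge_2_nat[OF p] by presburger
  show "6 \<le> m * CHAR('a)"
    using mult_le_mono[of 2 m 3 "CHAR('a)"] m(1) p3 by simp
  have "a \<noteq> c"
    using order[of 1] m(1) by auto
  then show "[:-a, 1:] ^ 3 * [:-c, 1:] dvd monom 1 (m * CHAR('a)) - 1"
    using triple_root_generator_dvd_monom_minus_1[OF roots _ p p3] by blast
  show "degree ([:-a, 1:] ^ 3 * [:-c, 1:]) = 4"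
    by (subst degree_mult_eq) (simp_all add: degree_linear_power)
  have "a \<noteq> 0"
    using roots(1) m(1) by (auto simp: power_0_left)
  then show "\<not> [:-a, 1:] ^ 3 * [:-c, 1:] dvd [:u, b:] + monom w j"
    if "u \<noteq> 0" "w \<noteq> 0" "2 \<le> j" "j < m * CHAR('a)" for u b w j
    using not_dvd_trinomial[OF _ order m(2) that] by blast
qed

section \<open>Finite fields of odd characteristic and roots of unity\<close>

lemma of_nat_CARD_eq_0: "of_nat CARD('a) = (0 :: 'a::{ring_1,finite})"
proof -
  have "(\<Sum>x\<in>UNIV. x + 1) = (\<Sum>x\<in>(UNIV :: 'a set). x)"
    by (rule sum.reindex_bij_witness[of _ "\<lambda>x. x - 1" "\<lambda>x. x + 1"]) auto
  then show ?thesis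
    by (simp add: sum.distrib)
qed

lemma CHAR_eq_CARD_if_prime:
  assumes "prime CARD('a::{ring_1,finite})"
  shows "CHAR('a) = CARD('a)"
proof -
  have "CHAR('a) dvd CARD('a)"
    using of_nat_CARD_eq_0[where 'a='a] by (simp add: of_nat_eq_0_iff_char_dvd)
  then show ?thesis
    using assms CHAR_not_1[where 'a='a] by (auto simp: prime_nat_iff)
qed

lemma neg_one_neq_one_if_odd_CHAR:
  assumes "odd CHAR('a::ring_1)"
  shows "(-1 :: 'a) \<noteq> 1"
proof
  assume "(-1 :: 'a) = 1"
  then have "(1 :: 'a) + 1 = 1 + -1"
    by simp
  then have "of_nat 2 = (0 :: 'a)"
    by simp
  then have "CHAR('a) dvd 2"
    by (simp only: of_nat_eq_0_iff_char_dvd)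
  then have "CHAR('a) \<le> 2"
    by (rule dvd_imp_le) simp
  with assms CHAR_not_1[where 'a='a] show False
    by presburger
qed

lemma primitive_root_unity_power_eq_1_iff:
  fixes \<omega> :: "'a::field"
  assumes \<omega>: "primitive_root_unity l \<omega>" and l: "0 < l"
  shows "\<omega> ^ j = 1 \<longleftrightarrow> l dvd j"
proof
  assume "\<omega> ^ j = 1"
  moreover have "\<omega> ^ j = (\<omega> ^ l) ^ (j div l) * \<omega> ^ (j mod l)"
    unfolding power_mult[symmetric] power_add[symmetric] by simp
  ultimately have "\<omega> ^ (j mod l) = 1"
    using \<omega> by (simp add: primitive_root_unity_def)
  show "l dvd j"
  proof (rule ccontr)
    assume "\<not> l dvd j"
    then have "0 < j mod l" "j mod l < l"
      using l by (simp_all add: mod_greater_zero_iff_not_dvd)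
    with \<omega> \<open>\<omega> ^ (j mod l) = 1\<close> show False
      by (auto simp: primitive_root_unity_def)
  qed
next
  assume "l dvd j"
  then show "\<omega> ^ j = 1"
    using \<omega> by (auto simp: primitive_root_unity_def power_mult elim!: dvdE)
qed

lemma primitive_root_unity_power_eq_neg_1_power:
  fixes \<omega> :: "'a::field"
  assumes \<omega>: "primitive_root_unity l \<omega>" "0 < l" and neg1: "(-1 :: 'a) \<noteq> 1"
    and l: "odd l \<or> 4 dvd l" and eq: "\<omega> ^ j = (-1) ^ j"
  shows "(if even l then l else 2 * l) dvd j"
proof (cases "even j")
  case True
  then have "l dvd j"
    using eq primitive_root_unity_power_eq_1_iff[OF \<omega>] by simp
  show ?thesis
  proof (cases "even l")
    case False
    then have "coprime 2 l"
      by simp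
    with \<open>even j\<close> \<open>l dvd j\<close> have "2 * l dvd j"
      by (intro divides_mult)
    with False show ?thesis
      by simp
  qed (use \<open>l dvd j\<close> in simp)
next
  case False
  then have "\<omega> ^ j = -1"
    using eq by simp
  then have "\<omega> ^ (2 * j) = 1"
    by (simp add: power_mult mult.commute[of 2])
  then have "l dvd 2 * j"
    using primitive_root_unity_power_eq_1_iff[OF \<omega>] by simp
  have "odd l"
  proof
    assume "even l"
    then have "4 dvd 2 * j"
      using l \<open>l dvd 2 * j\<close> dvd_trans by blast
    with False show False
      by presburger
  qed
  then have "coprime l 2"
    by simp
  with \<open>l dvd 2 * j\<close> have "l dvd j"
    by (simp add: coprime_dvd_mult_right_iff)
  then have "\<omega> ^ j = 1"
    using primitive_root_unity_power_eq_1_iff[OF \<omega>] by simp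
  with \<open>\<omega> ^ j = -1\<close> neg1 show ?thesis
    by simp
qed

lemma MDS_symbol_pair_cyclic_code_root_of_unity_and_1:
  fixes \<omega> :: "'a::{field,finite}"
  assumes "odd CHAR('a)" "primitive_root_unity l \<omega>" "1 < l" "coprime l CHAR('a)"
  shows "MDS_symbol_pair CARD('a) (l * CHAR('a))
           (cyclic_code (l * CHAR('a)) ([:-\<omega>, 1:] ^ 3 * [:-1, 1:])) 6"
  using MDS_symbol_pair_cyclic_code_triple_root[OF assms(1,3,4), of \<omega> 1]
    primitive_root_unity_power_eq_1_iff[OF assms(2)] assms(3) by simp

lemma MDS_symbol_pair_cyclic_code_root_of_unity_and_neg_1:
  fixes \<omega> a c :: "'a::{field,finite}"
  assumes char: "odd CHAR('a)" and \<omega>: "primitive_root_unity l \<omega>" "0 < l"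
    and coprime: "coprime l CHAR('a)" and l: "odd l \<or> 4 dvd l"
    and ac: "(a, c) \<in> {(-1, \<omega>), (\<omega>, -1)}"
  shows "MDS_symbol_pair CARD('a) ((if even l then l else 2 * l) * CHAR('a))
           (cyclic_code ((if even l then l else 2 * l) * CHAR('a)) ([:-a, 1:] ^ 3 * [:-c, 1:])) 6"
proof -
  define m where "m = (if even l then l else 2 * l)"
  have m: "1 < m" "coprime m CHAR('a)"
    using \<omega>(2) coprime char by (simp_all add: m_def) presburger
  have "\<omega> ^ m = 1" "(-1 :: 'a) ^ m = 1"
    using primitive_root_unity_power_eq_1_iff[OF \<omega>] by (simp_all add: m_def)
  then have roots: "a ^ m = 1" "c ^ m = 1"
    using ac by auto
  have "m dvd j" if "\<omega> ^ j = (-1) ^ j" for j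
    using primitive_root_unity_power_eq_neg_1_power[OF \<omega> _ l that]
      neg_one_neq_one_if_odd_CHAR[OF char] by (simp add: m_def)
  then have order: "m dvd j" if "a ^ j = c ^ j" for j
    using ac that by (auto simp del: power_minus1_even)
  show ?thesis
    using MDS_symbol_pair_cyclic_code_triple_root[OF char m roots order] by (simp add: m_def)
qed

theorem proposition3p3:
  fixes p l n r1 r2 r3 :: nat and \<omega> :: "'a::{field,finite}"
  assumes "prime p" and "odd p" and "CARD('a) = p"
    and "l > 2" and "l dvd p - 1"
    and "primitive_root_unity l \<omega>"
    and "(r1, r2, r3) \<in> {(1, 0, 3), (0, 3, 1), (0, 1, 3)}"
    and "r2 = 0 \<Longrightarrow> n = l * p"
    and "r2 \<noteq> 0 \<Longrightarrow> n = (if even l then l * p else 2 * l * p)"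
    and "(r1, r2, r3) \<in> {(0, 3, 1), (0, 1, 3)} \<Longrightarrow> odd l \<or> 4 dvd l"
  shows "MDS_symbol_pair p n
           (cyclic_code n ([:-1, 1:] ^ r1 * [:1, 1:] ^ r2 * [:-\<omega>, 1:] ^ r3)) 6"
proof -
  have char: "CHAR('a) = p" "odd CHAR('a)"
    using CHAR_eq_CARD_if_prime[where 'a='a] assms(1-3) by simp_all
  have coprime: "coprime l CHAR('a)"
    using coprime_divisors[OF assms(5) dvd_refl coprime_diff_one_left_nat] assms(1) char
    by (simp add: prime_gt_0_nat)
  have n: "r2 = 0 \<Longrightarrow> n = l * CHAR('a)"
    "r2 \<noteq> 0 \<Longrightarrow> n = (if even l then l else 2 * l) * CHAR('a)"
    using assms(8,9) char by simp_all
  from assms(7) consider "(r1, r2, r3) = (1, 0, 3)" | "(r1, r2, r3) = (0, 3, 1)"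
    | "(r1, r2, r3) = (0, 1, 3)"
    by blast
  then show ?thesis
  proof cases
    case 1
    then show ?thesis
      using MDS_symbol_pair_cyclic_code_root_of_unity_and_1[OF char(2) assms(6) _ coprime]
        assms(3,4) n char by (simp add: mult.commute)
  next
    case 2
    then show ?thesis
      using MDS_symbol_pair_cyclic_code_root_of_unity_and_neg_1[OF char(2) assms(6) _ coprime,
          of "-1" \<omega>] assms(3,4,10) n char by simp
  next
    case 3
    then show ?thesis
      using MDS_symbol_pair_cyclic_code_root_of_unity_and_neg_1[OF char(2) assms(6) _ coprime,
          of \<omega> "-1"] assms(3,4,10) n char by (simp add: mult.commute)
  qed
qed

end
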